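(* Let $G$ be a finitely generated torsion-free nilpotent group of nilpotency class $2$ with an involution $\ast$. Then $G$ contains a $\ast$-invariant Heisenberg subgroup; more precisely, there exist $x,y\in G$ with $[x,y]\ne 1$, $x^\ast\in\{x,x^{-1}\}$ and $y^\ast\in\{y,y^{-1}\}$.
   Context: An involution on a group is an anti-automorphism of order $2$. Commutators are $[x,y]=x^{-1}y^{-1}xy$. In a torsion-free group, two noncommuting elements whose commutator commutes with both generate a Heisenberg group $\langle x,y : [x,[x,y]]=[y,[x,y]]=1\rangle$. *)

theory Defs
  imports "HOL-Algebra.Algebra"
begin

definition commutator :: "('a, 'b) monoid_scheme \<Rightarrow> 'a \<Rightarrow> 'a \<Rightarrow> 'a" where
  "commutator G x y = inv\<^bsub>G\<^esub> x \<otimes>\<^bsub>G\<^esub> inv\<^bsub>G\<^esub> y \<otimes>\<^bsub>G\<^esub> x \<otimes>\<^bsub>G\<^esub> y"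

fun lower_central :: "('a, 'b) monoid_scheme \<Rightarrow> nat \<Rightarrow> 'a set" where
  "lower_central G 0 = carrier G"
| "lower_central G (Suc n) =
     generate G {commutator G x y | x y. x \<in> lower_central G n \<and> y \<in> carrier G}"

(* nilpotent of class exactly 2: gamma_3 = 1, gamma_2 \<noteq> 1 (index shifted by one) *)
definition nilpotent_class2 :: "('a, 'b) monoid_scheme \<Rightarrow> bool" where
  "nilpotent_class2 G \<longleftrightarrow> lower_central G 2 = {\<one>\<^bsub>G\<^esub>} \<and> lower_central G 1 \<noteq> {\<one>\<^bsub>G\<^esub>}"

definition finitely_generated_group :: "('a, 'b) monoid_scheme \<Rightarrow> bool" where
  "finitely_generated_group G \<longleftrightarrow> (\<exists>S. finite S \<and> S \<subseteq> carrier G \<and> generate G S = carrier G)"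

definition torsion_free_group :: "('a, 'b) monoid_scheme \<Rightarrow> bool" where
  "torsion_free_group G \<longleftrightarrow>
     (\<forall>x\<in>carrier G. \<forall>n::nat. n > 0 \<and> x [^]\<^bsub>G\<^esub> n = \<one>\<^bsub>G\<^esub> \<longrightarrow> x = \<one>\<^bsub>G\<^esub>)"

definition group_involution :: "('a, 'b) monoid_scheme \<Rightarrow> ('a \<Rightarrow> 'a) \<Rightarrow> bool" where
  "group_involution G s \<longleftrightarrow>
     bij_betw s (carrier G) (carrier G) \<and>
     (\<forall>x\<in>carrier G. \<forall>y\<in>carrier G. s (x \<otimes>\<^bsub>G\<^esub> y) = s y \<otimes>\<^bsub>G\<^esub> s x) \<and>
     (\<forall>x\<in>carrier G. s (s x) = x) \<and>
     (\<exists>x\<in>carrier G. s x \<noteq> x)"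

end

theory Submission
  imports Defs
begin

text \<open>
  Call x symmetric if x* is x or its inverse. Suppose all symmetric elements commute; we show G is
  abelian. For any k the elements k k* and k (k* ^ -2) k are symmetric (the latter because
  in class 2 the products u b b u and b u u b agree). Since commutators are central, the
  commutator is bilinear, so for symmetric q, writing c = [k,q] and d = [k*,q], we get
  c d = 1 and c (d ^ -2) c = 1, hence c ^ 4 = 1 and c = 1 by torsion-freeness. Thus every element
  commutes with every symmetric element, and applying the same argument in the other variable
  gives that G is abelian, contradicting class 2.
\<close>

lemma (in group) mult_inv_cancel_left [simp]:
  "x \<in> carrier G \<Longrightarrow> y \<in> carrier G \<Longrightarrow> x \<otimes> (inv x \<otimes> y) = y"
  by (simp add: m_assoc[symmetric])

lemma (in group) inv_mult_cancel_left [simp]: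
  "x \<in> carrier G \<Longrightarrow> y \<in> carrier G \<Longrightarrow> inv x \<otimes> (x \<otimes> y) = y"
  by (simp add: m_assoc[symmetric])

lemma (in group) commutator_closed [simp]:
  "x \<in> carrier G \<Longrightarrow> y \<in> carrier G \<Longrightarrow> commutator G x y \<in> carrier G"
  by (simp add: commutator_def)

lemma (in group) mult_eq_mult_commutator:
  "u \<in> carrier G \<Longrightarrow> b \<in> carrier G \<Longrightarrow> u \<otimes> b = b \<otimes> u \<otimes> commutator G u b"
  by (simp add: commutator_def m_assoc)

lemma (in group) inv_commutator:
  "x \<in> carrier G \<Longrightarrow> y \<in> carrier G \<Longrightarrow> inv (commutator G x y) = commutator G y x"
  by (simp add: commutator_def inv_mult_group m_assoc)

lemma (in group) commutator_eq_one_commute: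
  "x \<in> carrier G \<Longrightarrow> y \<in> carrier G \<Longrightarrow> commutator G x y = \<one> \<longleftrightarrow> commutator G y x = \<one>"
  by (metis inv_commutator inv_one)

lemma (in group) commute_if_commutator_eq_one:
  assumes "c \<in> carrier G" "z \<in> carrier G" "commutator G c z = \<one>"
  shows "c \<otimes> z = z \<otimes> c"
  using mult_eq_mult_commutator[OF assms(1,2)] assms by simp

lemma (in group) lower_central_one_eq_one_if_commutators_trivial:
  assumes "\<And>g h. g \<in> carrier G \<Longrightarrow> h \<in> carrier G \<Longrightarrow> commutator G g h = \<one>"
  shows "lower_central G 1 = {\<one>}"
proof -
  have "w = \<one>" if "w \<in> lower_central G 1" for w
  proof -
    from that have "w \<in> generate G {commutator G x y | x y. x \<in> carrier G \<and> y \<in> carrier G}"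
      by simp
    then show ?thesis
      by (induction rule: generate.induct) (auto simp: assms)
  qed
  moreover have "\<one> \<in> lower_central G 1"
    by (simp add: generate.one)
  ultimately show ?thesis
    by blast
qed

locale central_commutators = group +
  assumes commutator_central:
    "\<lbrakk>x \<in> carrier G; y \<in> carrier G; z \<in> carrier G\<rbrakk> \<Longrightarrow>
       commutator G x y \<otimes> z = z \<otimes> commutator G x y"
begin

lemma commutator_mult_left:
  assumes "x \<in> carrier G" "y \<in> carrier G" "z \<in> carrier G"
  shows "commutator G (x \<otimes> y) z = commutator G x z \<otimes> commutator G y z"
proof -
  have "commutator G (x \<otimes> y) z = inv y \<otimes> (inv x \<otimes> inv z \<otimes> x \<otimes> z) \<otimes> inv z \<otimes> y \<otimes> z"
    using assms by (simp add: commutator_def inv_mult_group m_assoc)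
  also have "\<dots> = (inv y \<otimes> commutator G x z) \<otimes> (inv z \<otimes> y \<otimes> z)"
    using assms by (simp add: commutator_def m_assoc)
  also have "\<dots> = (commutator G x z \<otimes> inv y) \<otimes> (inv z \<otimes> y \<otimes> z)"
    using assms by (simp only: commutator_central[of x z "inv y"] inv_closed)
  also have "\<dots> = commutator G x z \<otimes> (inv y \<otimes> inv z \<otimes> y \<otimes> z)"
    using assms by (simp add: m_assoc)
  finally show ?thesis
    by (simp add: commutator_def)
qed

lemma commutator_inv_left:
  assumes "x \<in> carrier G" "z \<in> carrier G"
  shows "commutator G (inv x) z = inv (commutator G x z)"
proof -
  have "commutator G x z \<otimes> commutator G (inv x) z = \<one>"
    using assms commutator_mult_left[of x "inv x" z] by (simp add: commutator_def m_assoc)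
  then have "inv (commutator G (inv x) z) = commutator G x z"
    using assms by (simp add: inv_equality)
  then show ?thesis
    using assms by (metis commutator_closed inv_closed inv_inv)
qed

lemma palindrome_swap:
  assumes "u \<in> carrier G" "b \<in> carrier G"
  shows "u \<otimes> b \<otimes> b \<otimes> u = b \<otimes> u \<otimes> u \<otimes> b"
proof -
  define c where "c = commutator G u b"
  have c: "c \<in> carrier G"
    using assms by (simp add: c_def)
  have ub: "u \<otimes> b = b \<otimes> u \<otimes> c"
    unfolding c_def using assms by (rule mult_eq_mult_commutator)
  have central: "c \<otimes> (b \<otimes> u) = (b \<otimes> u) \<otimes> c"
    unfolding c_def using assms by (simp add: commutator_central)
  have "u \<otimes> b \<otimes> b \<otimes> u = (u \<otimes> b) \<otimes> (b \<otimes> u)"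
    using assms by (simp add: m_assoc)
  also have "\<dots> = (b \<otimes> u \<otimes> c) \<otimes> (b \<otimes> u)"
    by (simp only: ub)
  also have "\<dots> = (b \<otimes> u) \<otimes> (c \<otimes> (b \<otimes> u))"
    using assms c by (simp add: m_assoc)
  also have "\<dots> = (b \<otimes> u) \<otimes> (u \<otimes> b)"
    by (simp only: central ub)
  finally show ?thesis
    using assms by (simp add: m_assoc)
qed

end

locale central_commutators_involution = central_commutators +
  fixes s :: "'a \<Rightarrow> 'a"
  assumes involution_closed [simp]: "x \<in> carrier G \<Longrightarrow> s x \<in> carrier G"
    and involution_mult: "x \<in> carrier G \<Longrightarrow> y \<in> carrier G \<Longrightarrow> s (x \<otimes> y) = s y \<otimes> s x"
    and involution_involutive [simp]: "x \<in> carrier G \<Longrightarrow> s (s x) = x"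
begin

lemma involution_one [simp]: "s \<one> = \<one>"
proof -
  have "s \<one> \<otimes> s \<one> = s \<one>"
    using involution_mult[of \<one> \<one>] by (metis l_one one_closed)
  then show ?thesis
    by simp
qed

lemma involution_inv:
  assumes "x \<in> carrier G"
  shows "s (inv x) = inv (s x)"
proof -
  have "s (inv x) \<otimes> s x = \<one>"
    using assms involution_mult[of x "inv x"] by simp
  then show ?thesis
    using assms inv_equality by simp
qed

lemma involution_mult_self:
  "k \<in> carrier G \<Longrightarrow> s (k \<otimes> s k) = k \<otimes> s k"
  by (simp add: involution_mult)

lemma involution_palindrome:
  assumes k: "k \<in> carrier G"
  defines "p \<equiv> k \<otimes> inv (s k) \<otimes> inv (s k) \<otimes> k"
  shows "s p = inv p"
proof -
  have "s p = s k \<otimes> inv k \<otimes> inv k \<otimes> s k"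
    using k by (simp add: p_def involution_mult involution_inv m_assoc)
  also have "\<dots> = inv k \<otimes> s k \<otimes> s k \<otimes> inv k"
    using k palindrome_swap[of "s k" "inv k"] by simp
  also have "\<dots> = inv p"
    using k by (simp add: p_def inv_mult_group m_assoc)
  finally show ?thesis .
qed

lemma commutator_eq_one_if_commutes_with_symmetric:
  assumes tf: "torsion_free_group G"
    and symmetric_commute:
      "\<And>x. x \<in> carrier G \<Longrightarrow> s x \<in> {x, inv x} \<Longrightarrow> commutator G x q = \<one>"
    and k: "k \<in> carrier G" and q: "q \<in> carrier G"
  shows "commutator G k q = \<one>"
proof -
  define c d where "c = commutator G k q" and "d = commutator G (s k) q"
  have cd: "c \<in> carrier G" "d \<in> carrier G"
    using k q by (simp_all add: c_def d_def)
  have "commutator G (k \<otimes> s k) q = \<one>"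
    by (rule symmetric_commute) (use k involution_mult_self in auto)
  then have "c \<otimes> d = \<one>"
    using k q by (simp add: c_def d_def commutator_mult_left)
  then have inv_d: "inv d = c"
    using cd by (simp add: inv_equality)
  have "commutator G (k \<otimes> inv (s k) \<otimes> inv (s k) \<otimes> k) q = \<one>"
    by (rule symmetric_commute) (use k involution_palindrome in auto)
  then have "c \<otimes> inv d \<otimes> inv d \<otimes> c = \<one>"
    using k q by (simp add: c_def d_def commutator_mult_left commutator_inv_left)
  then have "c [^] (4::nat) = \<one>"
    using inv_d cd by (simp add: eval_nat_numeral m_assoc)
  then show ?thesis
    using tf cd unfolding torsion_free_group_def c_def by (metis zero_less_numeral)
qed

lemma commutators_trivial_if_symmetric_commute:
  assumes tf: "torsion_free_group G"
    and symmetric_commute: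
      "\<And>x y. x \<in> carrier G \<Longrightarrow> y \<in> carrier G \<Longrightarrow> s x \<in> {x, inv x} \<Longrightarrow> s y \<in> {y, inv y}
        \<Longrightarrow> commutator G x y = \<one>"
    and g: "g \<in> carrier G" and h: "h \<in> carrier G"
  shows "commutator G g h = \<one>"
proof -
  have left: "commutator G x q = \<one>" if "x \<in> carrier G" "q \<in> carrier G" "s q \<in> {q, inv q}"
    for x q
    using tf symmetric_commute that commutator_eq_one_if_commutes_with_symmetric by blast
  have "commutator G x g = \<one>" if "x \<in> carrier G" "s x \<in> {x, inv x}" for x
    using left[OF g that] g that(1) commutator_eq_one_commute by metis
  then have "commutator G h g = \<one>"
    using tf g h commutator_eq_one_if_commutes_with_symmetric by blast
  then show ?thesis
    using g h commutator_eq_one_commute by metis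
qed

end

lemma (in group) central_commutators_if_class2:
  assumes "nilpotent_class2 G"
  shows "central_commutators G"
proof unfold_locales
  fix x y z
  assume xyz: "x \<in> carrier G" "y \<in> carrier G" "z \<in> carrier G"
  have "commutator G x y \<in> lower_central G 1"
    using xyz by (auto intro: generate.incl)
  then have "commutator G (commutator G x y) z \<in> lower_central G 2"
    unfolding numeral_2_eq_2 using xyz
    by (simp only: lower_central.simps) (blast intro: generate.incl)
  then have "commutator G (commutator G x y) z = \<one>"
    using assms by (simp add: nilpotent_class2_def)
  then show "commutator G x y \<otimes> z = z \<otimes> commutator G x y"
    using xyz commute_if_commutator_eq_one[of "commutator G x y" z] by simp
qed

lemma (in central_commutators) central_commutators_involution_if_group_involution:
  assumes "group_involution G s"
  shows "central_commutators_involution G s"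
proof unfold_locales
  fix x y
  assume "x \<in> carrier G" "y \<in> carrier G"
  with assms show "s x \<in> carrier G" "s (x \<otimes> y) = s y \<otimes> s x" "s (s x) = x"
    unfolding group_involution_def by (blast intro: bij_betw_apply)+
qed

theorem lemma2p3:
  fixes G :: "('a, 'b) monoid_scheme" and s :: "'a \<Rightarrow> 'a"
  assumes "group G"
    and "finitely_generated_group G"
    and "torsion_free_group G"
    and "nilpotent_class2 G"
    and "group_involution G s"
  shows "\<exists>x\<in>carrier G. \<exists>y\<in>carrier G. commutator G x y \<noteq> \<one>\<^bsub>G\<^esub> \<and>
           s x \<in> {x, inv\<^bsub>G\<^esub> x} \<and> s y \<in> {y, inv\<^bsub>G\<^esub> y}"
proof (rule ccontr)
  assume symmetric_commute: "\<not> ?thesis"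
  interpret group G by fact
  interpret central_commutators G
    using assms(4) by (rule central_commutators_if_class2)
  interpret central_commutators_involution G s
    using assms(5) by (rule central_commutators_involution_if_group_involution)
  have "commutator G g h = \<one>\<^bsub>G\<^esub>" if "g \<in> carrier G" "h \<in> carrier G" for g h
    by (rule commutators_trivial_if_symmetric_commute[OF assms(3) _ that])
      (use symmetric_commute in blast)
  then have "lower_central G 1 = {\<one>\<^bsub>G\<^esub>}"
    by (rule lower_central_one_eq_one_if_commutators_trivial)
  then show False
    using assms(4) by (simp add: nilpotent_class2_def)
qed

end
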